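(* Let $(X,d,\mu)$ be a coarse median space which is geodesic and has rank $1$. Then for any $\zeta,\varepsilon>0$ there exists a constant $\widetilde D=\widetilde D(\zeta,\varepsilon)$ such that for any $a,b\in X$ and any $(\zeta,\varepsilon)$-quasi-geodesic $\gamma\colon[s,t]\to X$ with $\gamma(s)=a$, $\gamma(t)=b$, the Hausdorff distance between the interval $[a,b]$ and $\mathrm{Im}(\gamma)$ is less than $\widetilde D$.
   Context: Write $x\sim_s y$ if $d(x,y)\leqslant s$. A coarse median space is a triple $(X,d,\mu)$ with $(X,d)$ a metric space and $\mu\colon X^3\to X$ satisfying: (M1) $\mu(a,a,b)=a$; (M2) $\mu(a_1,a_2,a_3)$ is invariant under permutations of its arguments; (C1) there is an affine $\rho(t)=Kt+H_0$ with $d(\mu(a,b,c),\mu(a',b',c'))\leqslant\rho(d(a,a')+d(b,b')+d(c,c'))$ for all points; (C2) there is $H\colon\mathbb N\to[0,\infty)$ such that for every finite $A\subseteq X$ with $1\leqslant|A|\leqslant p$ there are a finite median algebra $(\Pi,\mu_\Pi)$ and maps $\pi\colon A\to\Pi$, $\lambda\colon\Pi\to X$ with $\lambda\mu_\Pi(x,y,z)\sim_{H(p)}\mu(\lambda x,\lambda y,\lambda z)$ for all $x,y,z\in\Pi$ and $\lambda\pi a\sim_{H(p)}a$ for all $a\in A$. (A median algebra is a set with a ternary operation $m$ satisfying $m(a,a,b)=a$, full symmetry, and $m(m(a,b,c),b,d)=m(a,b,m(c,b,d))$.) The rank of a median algebra is the supremum of $n$ such that it contains a subalgebra isomorphic to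 $I^n=(\mathbb Z_2)^n$ with coordinatewise majority vote as median. The coarse median space has rank at most $n$ if there exist $\rho,H$ as in (C1),(C2) for which $\Pi$ in (C2) can always be chosen of rank at most $n$; its rank is the least such $n$. The interval is $[a,b]=\{\mu(a,y,b):y\in X\}$. A map $\gamma\colon[s,t]\to X$ is a $(\zeta,\varepsilon)$-quasi-geodesic if $\zeta^{-1}|u-v|-\varepsilon\leqslant d(\gamma(u),\gamma(v))\leqslant\zeta|u-v|+\varepsilon$ for all $u,v\in[s,t]$. *)

theory Defs
  imports "HOL-Analysis.Analysis" "HOL-Library.Extended_Real"
begin

definition median_algebra_on :: "'b set \<Rightarrow> ('b \<Rightarrow> 'b \<Rightarrow> 'b \<Rightarrow> 'b) \<Rightarrow> bool" where
  "median_algebra_on P m \<longleftrightarrow>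
     (\<forall>a\<in>P. \<forall>b\<in>P. \<forall>c\<in>P. m a b c \<in> P) \<and>
     (\<forall>a\<in>P. \<forall>b\<in>P. m a a b = a) \<and>
     (\<forall>a\<in>P. \<forall>b\<in>P. \<forall>c\<in>P. m a b c = m b a c \<and> m a b c = m a c b) \<and>
     (\<forall>a\<in>P. \<forall>b\<in>P. \<forall>c\<in>P. \<forall>d\<in>P. m (m a b c) b d = m a b (m c b d))"

definition cube :: "nat \<Rightarrow> bool list set" where
  "cube k = {xs. length xs = k}"

definition majority :: "bool list \<Rightarrow> bool list \<Rightarrow> bool list \<Rightarrow> bool list" where
  "majority xs ys zs = map (\<lambda>((a, b), c). (a \<and> b) \<or> (b \<and> c) \<or> (a \<and> c)) (zip (zip xs ys) zs)"

definition cube_embeds :: "'b set \<Rightarrow> ('b \<Rightarrow> 'b \<Rightarrow> 'b \<Rightarrow> 'b) \<Rightarrow> nat \<Rightarrow> bool" where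
  "cube_embeds P m k \<longleftrightarrow>
     (\<exists>f. inj_on f (cube k) \<and> f ` cube k \<subseteq> P \<and>
          (\<forall>x\<in>cube k. \<forall>y\<in>cube k. \<forall>z\<in>cube k. f (majority x y z) = m (f x) (f y) (f z)))"

definition median_rank_le :: "'b set \<Rightarrow> ('b \<Rightarrow> 'b \<Rightarrow> 'b \<Rightarrow> 'b) \<Rightarrow> nat \<Rightarrow> bool" where
  "median_rank_le P m n \<longleftrightarrow> (\<forall>k. cube_embeds P m k \<longrightarrow> k \<le> n)"

text \<open>The finite median algebra in (C2) is represented on a finite subset of nat
  (every finite median algebra is isomorphic to one of these).\<close>

definition coarse_median_rank_le :: "('a::metric_space \<Rightarrow> 'a \<Rightarrow> 'a \<Rightarrow> 'a) \<Rightarrow> nat \<Rightarrow> bool" where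
  "coarse_median_rank_le \<mu> n \<longleftrightarrow>
     (\<forall>a b. \<mu> a a b = a) \<and>
     (\<forall>a b c. \<mu> a b c = \<mu> b a c \<and> \<mu> a b c = \<mu> a c b \<and> \<mu> a b c = \<mu> b c a) \<and>
     (\<exists>K H0 (H :: nat \<Rightarrow> real).
        (\<forall>p. H p \<ge> 0) \<and>
        (\<forall>a b c a' b' c'. dist (\<mu> a b c) (\<mu> a' b' c')
              \<le> K * (dist a a' + dist b b' + dist c c') + H0) \<and>
        (\<forall>p A. finite A \<and> 1 \<le> card A \<and> card A \<le> p \<longrightarrow>
           (\<exists>(P :: nat set) m \<pi> lam. finite P \<and> median_algebra_on P m \<and> median_rank_le P m n \<and>
              \<pi> ` A \<subseteq> P \<and>
              (\<forall>x\<in>P. \<forall>y\<in>P. \<forall>z\<in>P. dist (lam (m x y z)) (\<mu> (lam x) (lam y) (lam z)) \<le> H p) \<and>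
              (\<forall>a\<in>A. dist (lam (\<pi> a)) a \<le> H p))))"

definition coarse_median_rank :: "('a::metric_space \<Rightarrow> 'a \<Rightarrow> 'a \<Rightarrow> 'a) \<Rightarrow> nat \<Rightarrow> bool" where
  "coarse_median_rank \<mu> n \<longleftrightarrow> coarse_median_rank_le \<mu> n \<and> (\<forall>k<n. \<not> coarse_median_rank_le \<mu> k)"

definition median_interval :: "('a \<Rightarrow> 'a \<Rightarrow> 'a \<Rightarrow> 'a) \<Rightarrow> 'a \<Rightarrow> 'a \<Rightarrow> 'a set" where
  "median_interval \<mu> a b = {\<mu> a y b | y. True}"

definition geodesic_space :: "'a::metric_space itself \<Rightarrow> bool" where
  "geodesic_space _ \<longleftrightarrow> (\<forall>x y::'a. \<exists>\<gamma>::real \<Rightarrow> 'a. \<gamma> 0 = x \<and> \<gamma> (dist x y) = y \<and>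
       (\<forall>u\<in>{0..dist x y}. \<forall>v\<in>{0..dist x y}. dist (\<gamma> u) (\<gamma> v) = \<bar>u - v\<bar>))"

definition quasi_geodesic :: "real \<Rightarrow> real \<Rightarrow> real \<Rightarrow> real \<Rightarrow> (real \<Rightarrow> 'a::metric_space) \<Rightarrow> bool" where
  "quasi_geodesic \<zeta> \<epsilon> s t \<gamma> \<longleftrightarrow>
     (\<forall>u\<in>{s..t}. \<forall>v\<in>{s..t}. \<bar>u - v\<bar> / \<zeta> - \<epsilon> \<le> dist (\<gamma> u) (\<gamma> v) \<and>
                             dist (\<gamma> u) (\<gamma> v) \<le> \<zeta> * \<bar>u - v\<bar> + \<epsilon>)"

definition hausdorff_distance :: "'a::metric_space set \<Rightarrow> 'a set \<Rightarrow> ereal" where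
  "hausdorff_distance A B =
     max (SUP a\<in>A. ereal (infdist a B)) (SUP b\<in>B. ereal (infdist b A))"

end

theory Submission
  imports Defs
begin

text \<open>In a coarse median space of rank one, intervals behave like geodesics in a tree:
  up to a uniform error, \<open>[a,b]\<close> lies in \<open>[a,c] \<union> [c,b]\<close>, because in the approximating finite
  median algebras of rank one the square spanned by a point of \<open>[a,b]\<close>, its projections to
  \<open>[a,c]\<close>, \<open>[b,c]\<close> and the median of \<open>a, b, c\<close> cannot be a copy of \<open>I\<^sup>2\<close>.
  Bisecting \<open>k\<close> times, the interval between the ends of a coarse path of parameter length \<open>2\<^sup>k\<close>
  lies within \<open>O(k)\<close> of the path.

  For a quasi-geodesic \<open>\<gamma>\<close> from \<open>a\<close> to \<open>b\<close> this first shows that the distances from points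
  of \<open>[a,b]\<close> to \<open>\<gamma>\<close> have a finite supremum \<open>S\<close>. A point \<open>x \<in> [a,b]\<close> almost realising \<open>S\<close>
  has points \<open>y \<in> [a,x]\<close>, \<open>y' \<in> [x,b]\<close> at distance about \<open>2 S\<close> from \<open>x\<close>, each within
  \<open>S + O(1)\<close> of \<open>\<gamma>\<close>; the path running from \<open>y\<close> to \<open>\<gamma>\<close>, along \<open>\<gamma>\<close> and back to \<open>y'\<close> has
  parameter length \<open>O(S)\<close>, stays at distance \<open>S - O(1)\<close> from \<open>x\<close>, and comes within \<open>O(log S)\<close>
  of \<open>x\<close>. Hence \<open>S\<close> is bounded in terms of \<open>\<zeta>, \<epsilon>\<close>. Conversely, a chain crossing \<open>[a,b]\<close> in
  bounded steps is matched with parameters of \<open>\<gamma>\<close> sweeping \<open>[s,t]\<close>, so \<open>\<gamma>\<close> stays near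
  \<open>[a,b]\<close>.\<close>

section \<open>Finite median algebras of rank one\<close>

locale median_algebra =
  fixes P :: "'b set" and m :: "'b \<Rightarrow> 'b \<Rightarrow> 'b \<Rightarrow> 'b"
  assumes closed: "a \<in> P \<Longrightarrow> b \<in> P \<Longrightarrow> c \<in> P \<Longrightarrow> m a b c \<in> P"
    and idem: "a \<in> P \<Longrightarrow> b \<in> P \<Longrightarrow> m a a b = a"
    and commute_12: "a \<in> P \<Longrightarrow> b \<in> P \<Longrightarrow> c \<in> P \<Longrightarrow> m a b c = m b a c"
    and commute_23: "a \<in> P \<Longrightarrow> b \<in> P \<Longrightarrow> c \<in> P \<Longrightarrow> m a b c = m a c b"
    and assoc: "a \<in> P \<Longrightarrow> b \<in> P \<Longrightarrow> c \<in> P \<Longrightarrow> d \<in> P \<Longrightarrow> m (m a b c) b d = m a b (m c b d)"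

lemma median_algebra_onD: "median_algebra_on P m \<Longrightarrow> median_algebra P m"
  unfolding median_algebra_on_def by unfold_locales blast+

context median_algebra
begin

lemma perm:
  assumes "a \<in> P" "b \<in> P" "c \<in> P"
  shows "m a c b = m a b c" "m b a c = m a b c" "m b c a = m a b c"
    "m c a b = m a b c" "m c b a = m a b c"
proof -
  show 1: "m a c b = m a b c" using commute_23[OF assms] by simp
  show 2: "m b a c = m a b c" using commute_12[OF assms] by simp
  show 3: "m b c a = m a b c" using commute_12[OF assms] commute_23[OF assms(2,1,3)] by simp
  show "m c a b = m a b c" using commute_23[OF assms] commute_12[OF assms(1,3,2)] by simp
  show "m c b a = m a b c" using 3 commute_12[OF assms(2,3,1)] by simp
qed

lemma idem_13: "a \<in> P \<Longrightarrow> b \<in> P \<Longrightarrow> m a b a = a"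
  and idem_23: "a \<in> P \<Longrightarrow> b \<in> P \<Longrightarrow> m b a a = a"
  using idem perm by metis+

lemma median_in_interval:
  assumes "a \<in> P" "b \<in> P" "y \<in> P"
  shows "m a (m a y b) b = m a y b"
proof -
  have "m a (m a y b) b = m (m a y b) a b" using perm(2)[OF assms(1) closed[OF assms(1,3,2)] assms(2)] by simp
  also have "\<dots> = m (m y a b) a b" using perm(2)[OF assms(1,3,2)] by simp
  also have "\<dots> = m y a (m b a b)" using assoc assms by blast
  also have "\<dots> = m a y b" using idem_13 perm(2)[OF assms(1,3,2)] assms by simp
  finally show ?thesis .
qed

lemma median_absorb:
  assumes "a \<in> P" "b \<in> P" "y \<in> P"
  shows "m a b (m a b y) = m a b y"
  using median_in_interval[OF assms] perm(1)[OF assms] perm(1)[OF assms(1,2) closed[OF assms]]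
  by simp

lemma interval_convex:
  assumes "a \<in> P" "b \<in> P" "x \<in> P" "w \<in> P" "m a x b = x" "m a w x = w"
  shows "m a w b = w"
  by (metis assoc assms commute_12)

lemma median_of_interval_halves:
  assumes "a \<in> P" "b \<in> P" "x \<in> P" "y \<in> P" "y' \<in> P"
    and "m a x b = x" "m a y x = y" "m x y' b = y'"
  shows "m y x y' = x"
  by (metis assoc assms idem commute_12 commute_23)

text \<open>For \<open>x \<in> [a,b]\<close> and any \<open>c\<close>, the projections \<open>p = m a c x\<close>, \<open>q = m b c x\<close>
  and the median \<open>r = m a b c\<close> span a square \<open>x, p, r, q\<close>.\<close>

context
  fixes a b x c
  assumes in_P: "a \<in> P" "b \<in> P" "x \<in> P" "c \<in> P" and x_between: "m a x b = x"
begin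

lemma gate_step: "m x a (m b a c) = m x a c"
proof -
  have "m (m x a b) a c = m x a (m b a c)" using assoc[OF in_P(3,1,2,4)] .
  then show ?thesis using x_between perm(2)[of a x b] in_P by simp
qed

lemma proj_a_between_a_and_median: "m a (m a c x) (m a b c) = m a c x"
proof -
  have r_P: "m b a c \<in> P" using closed[OF in_P(2,1,4)] .
  have "m a (m a c x) (m a b c) = m (m c a x) a (m b a c)"
    using perm(2)[of a c x] perm(2)[of a b c] perm(2)[OF in_P(1) closed[OF in_P(4,1,3)] r_P] in_P
    by simp
  also have "\<dots> = m c a (m x a (m b a c))" using assoc[OF in_P(4,1,3) r_P] .
  also have "\<dots> = m c a (m c a x)" using gate_step perm(5)[of c a x] in_P by simp
  also have "\<dots> = m c a x" using median_absorb[OF in_P(4,1,3)] .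
  also have "\<dots> = m a c x" using perm(2)[of a c x] in_P by simp
  finally show ?thesis .
qed

lemma proj_a_between_x_and_median: "m x (m a c x) (m a b c) = m a c x"
proof -
  define p where "p = m a x c"
  define r where "r = m a b c"
  have pr_P: "p \<in> P" "r \<in> P" using closed in_P p_def r_def by auto
  have p_perm: "m a c x = p" "m c x a = p" using p_def perm(1,5)[of a x c] in_P by simp_all
  have "m a x r = p"
    using gate_step p_def r_def perm(2)[of a b c] perm(2)[OF in_P(1,3) pr_P(2)] perm(2)[of a x c] in_P
    by simp
  then have "m p x r = m c x (m c x a)" using assoc[OF in_P(4,3,1) pr_P(2)] p_perm by simp
  also have "\<dots> = m c x a" using median_absorb[OF in_P(4,3,1)] .
  also have "\<dots> = p" using p_perm by simp
  finally have "m p x r = p" .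
  then show ?thesis using perm(2)[OF in_P(3) pr_P] p_perm r_def by simp
qed

lemma x_between_projs: "m (m a c x) x (m b c x) = x"
proof -
  have q: "m c x (m b c x) = m b x c"
    using median_absorb[of c x b] perm(3)[of b c x] perm(1)[of b x c] perm(4)[of b x c] in_P by simp
  have "m (m a c x) x (m b c x) = m (m a x c) x (m b c x)" using perm(1)[of a x c] in_P by simp
  also have "\<dots> = m a x (m c x (m b c x))" using assoc[OF in_P(1,3,4) closed[OF in_P(2,4,3)]] .
  also have "\<dots> = m a x (m b x c)" using q by simp
  also have "\<dots> = m (m a x b) x c" using assoc[OF in_P(1,3,2,4)] by simp
  finally show ?thesis using x_between idem in_P by simp
qed

end

lemma proj_b_between_x_and_median:
  assumes "a \<in> P" "b \<in> P" "x \<in> P" "c \<in> P" "m a x b = x"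
  shows "m x (m b c x) (m a b c) = m b c x"
proof -
  have "m b x a = x" using assms perm(5)[of a x b] by simp
  then have "m x (m b c x) (m b a c) = m b c x" by (rule proj_a_between_x_and_median[OF assms(2,1,3,4)])
  then show ?thesis using perm(2)[of a b c] assms by simp
qed

lemma median_between_projs:
  assumes in_P: "a \<in> P" "b \<in> P" "x \<in> P" "c \<in> P" and x_between: "m a x b = x"
  shows "m (m a c x) (m a b c) (m b c x) = m a b c"
proof (rule median_of_interval_halves[of a b])
  show "m a (m a b c) b = m a b c"
    using median_in_interval[of a b c] perm(1)[of a b c] in_P by simp
  show "m a (m a c x) (m a b c) = m a c x" using proj_a_between_a_and_median assms .
  have "m b x a = x" using assms perm(5)[of a x b] by simp
  then have "m b (m b c x) (m b a c) = m b c x" by (rule proj_a_between_a_and_median[OF in_P(2,1,3,4)])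
  then show "m (m a b c) (m b c x) b = m b c x"
    using perm(2)[of a b c] perm(4)[OF in_P(2) closed[OF in_P(2,4,3)] closed[OF in_P(2,1,4)]]
      perm(1)[OF closed[OF in_P(1,2,4)] in_P(2) closed[OF in_P(2,4,3)]] in_P
    by simp
qed (use in_P closed in auto)

lemma cube_2: "cube 2 = {[False,False], [False,True], [True,False], [True,True]}"
  by (auto simp: cube_def length_Suc_conv numeral_2_eq_2)

lemma square_cube_embeds:
  assumes in_P: "x \<in> P" "p \<in> P" "r \<in> P" "q \<in> P"
    and square: "m x p r = p" "m x q r = q" "m p x q = x" "m p r q = r"
    and distinct: "distinct [x, p, r, q]"
  shows "cube_embeds P m 2"
  unfolding cube_embeds_def
proof (intro exI conjI)
  let ?f = "\<lambda>l::bool list. if l = [False,False] then x else if l = [False,True] then p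
     else if l = [True,True] then r else q"
  show "inj_on ?f (cube 2)" unfolding cube_2 inj_on_def using distinct by auto
  show "?f ` cube 2 \<subseteq> P" unfolding cube_2 using in_P by auto
  show "\<forall>u\<in>cube 2. \<forall>v\<in>cube 2. \<forall>w\<in>cube 2. ?f (majority u v w) = m (?f u) (?f v) (?f w)"
    unfolding cube_2
    using perm[OF in_P(1,2,3)] perm[OF in_P(1,4,3)] perm[OF in_P(2,1,4)] perm[OF in_P(2,3,4)]
      square idem idem_13 idem_23 in_P
    by (simp add: majority_def)
qed

text \<open>In rank one the square above degenerates, so \<open>x\<close> lies in \<open>[a,c]\<close> or in \<open>[b,c]\<close>.\<close>

lemma rank_one_interval_split:
  assumes rank: "median_rank_le P m 1"
    and in_P: "a \<in> P" "b \<in> P" "x \<in> P" "c \<in> P" and x_between: "m a x b = x"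
  shows "m a c x = x \<or> m b c x = x"
proof (rule ccontr)
  assume not_in: "\<not> (m a c x = x \<or> m b c x = x)"
  define p where "p = m a c x"
  define q where "q = m b c x"
  define r where "r = m a b c"
  have sq_P: "p \<in> P" "r \<in> P" "q \<in> P" using in_P closed p_def q_def r_def by auto
  have square: "m x p r = p" "m x q r = q" "m p x q = x" "m p r q = r"
    using proj_a_between_x_and_median[OF in_P x_between]
      proj_b_between_x_and_median[OF in_P x_between]
      x_between_projs[OF in_P x_between] median_between_projs[OF in_P x_between]
    unfolding p_def q_def r_def by simp_all
  have "x \<noteq> p" "x \<noteq> q" using not_in p_def q_def by auto
  moreover have "x \<noteq> r"
  proof
    assume "x = r"
    then have "p = m a c (m a c b)" using p_def r_def perm(1)[of a b c] in_P by simp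
    also have "\<dots> = m a c b" using median_absorb[OF in_P(1,4,2)] .
    also have "\<dots> = x" using \<open>x = r\<close> r_def perm(1)[of a b c] in_P by simp
    finally show False using \<open>x \<noteq> p\<close> by simp
  qed
  moreover have "p \<noteq> q" using square(3) idem_13[OF sq_P(1) in_P(3)] \<open>x \<noteq> p\<close> by auto
  moreover have "p \<noteq> r"
  proof
    assume "p = r"
    then have "m x q p = q" using square(2) by simp
    then show False using square(3) perm(3)[OF sq_P(1) in_P(3) sq_P(3)] \<open>x \<noteq> q\<close> by simp
  qed
  moreover have "q \<noteq> r" using square(1,3) perm(2)[OF sq_P(1) in_P(3) sq_P(3)] \<open>x \<noteq> p\<close> by auto
  ultimately have "cube_embeds P m 2"
    using square_cube_embeds[OF in_P(3) sq_P square] by simp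
  with rank show False unfolding median_rank_le_def by fastforce
qed

end

section \<open>Coarse median spaces of rank one\<close>

locale rank_one_coarse_median =
  fixes \<mu> :: "'a::metric_space \<Rightarrow> 'a \<Rightarrow> 'a \<Rightarrow> 'a" and K H0 :: real and H :: "nat \<Rightarrow> real"
  assumes idem: "\<mu> a a b = a"
    and commute_12: "\<mu> a b c = \<mu> b a c"
    and commute_23: "\<mu> a b c = \<mu> a c b"
    and K_nonneg: "0 \<le> K"
    and coarse_lipschitz:
      "dist (\<mu> a b c) (\<mu> a' b' c') \<le> K * (dist a a' + dist b b' + dist c c') + H0"
    and approximation: "finite A \<Longrightarrow> 1 \<le> card A \<Longrightarrow> card A \<le> p \<Longrightarrow>
      \<exists>(P :: nat set) m \<pi> lam. median_algebra_on P m \<and> median_rank_le P m 1 \<and> \<pi> ` A \<subseteq> P \<and>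
        (\<forall>x\<in>P. \<forall>y\<in>P. \<forall>z\<in>P. dist (lam (m x y z)) (\<mu> (lam x) (lam y) (lam z)) \<le> H p) \<and>
        (\<forall>a\<in>A. dist (lam (\<pi> a)) a \<le> H p)"
begin

lemma perm:
  "\<mu> a c b = \<mu> a b c" "\<mu> b a c = \<mu> a b c" "\<mu> b c a = \<mu> a b c"
  "\<mu> c a b = \<mu> a b c" "\<mu> c b a = \<mu> a b c"
  by (metis commute_12 commute_23)+

lemma idem_13: "\<mu> a b a = a"
  and idem_23: "\<mu> b a a = a"
  by (metis idem perm(1), metis idem perm(4))

lemma H0_nonneg: "0 \<le> H0"
  using coarse_lipschitz[of a a a a a a] by simp

lemma dist_median_left: "dist (\<mu> a b c) a \<le> K * dist a b + H0"
  using coarse_lipschitz[of a b c a a c] by (simp add: idem dist_commute)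

lemma median_in_median_interval: "\<mu> a y b \<in> median_interval \<mu> a b"
  unfolding median_interval_def by blast

lemma median_interval_commute: "median_interval \<mu> a b = median_interval \<mu> b a"
  unfolding median_interval_def using perm(5) by blast

lemma finite_approximation:
  assumes "length xs \<le> p" "xs \<noteq> []"
  obtains P :: "nat set" and m \<pi> lam where "median_algebra P m" "median_rank_le P m 1"
    "\<And>a. a \<in> set xs \<Longrightarrow> \<pi> a \<in> P"
    "\<And>x y z. x \<in> P \<Longrightarrow> y \<in> P \<Longrightarrow> z \<in> P \<Longrightarrow> dist (lam (m x y z)) (\<mu> (lam x) (lam y) (lam z)) \<le> H p"
    "\<And>a. a \<in> set xs \<Longrightarrow> dist (lam (\<pi> a)) a \<le> H p"
proof -
  have "card (set xs) \<le> p" using card_length assms(1) le_trans by blast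
  moreover have "1 \<le> card (set xs)" using assms(2) by (simp add: Suc_leI card_gt_0_iff)
  ultimately show ?thesis
    using approximation[of "set xs" p] that median_algebra_onD by (metis finite_set image_subset_iff)
qed

lemma dist_approx_median:
  assumes hom: "\<And>x y z. x \<in> P \<Longrightarrow> y \<in> P \<Longrightarrow> z \<in> P \<Longrightarrow>
      dist (lam (m x y z)) (\<mu> (lam x) (lam y) (lam z)) \<le> h"
    and in_P: "x \<in> P" "y \<in> P" "z \<in> P"
    and close: "dist (lam x) A \<le> u" "dist (lam y) B \<le> v" "dist (lam z) C \<le> w"
  shows "dist (lam (m x y z)) (\<mu> A B C) \<le> h + K * (u + v + w) + H0"
proof -
  have "dist (lam (m x y z)) (\<mu> A B C)
      \<le> dist (lam (m x y z)) (\<mu> (lam x) (lam y) (lam z)) + dist (\<mu> (lam x) (lam y) (lam z)) (\<mu> A B C)"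
    by (rule dist_triangle)
  also have "\<dots> \<le> h + (K * (dist (lam x) A + dist (lam y) B + dist (lam z) C) + H0)"
    using hom[OF in_P] coarse_lipschitz by (rule add_mono)
  also have "\<dots> \<le> h + (K * (u + v + w) + H0)"
    using close K_nonneg by (simp add: mult_left_mono)
  finally show ?thesis by simp
qed

text \<open>Identities of finite median algebras of rank one, applied to boundedly many points,
  transfer to \<open>\<mu>\<close> through the approximations, with errors depending only on \<open>K\<close>, \<open>H0\<close>
  and \<open>H\<close>.\<close>

lemma coarse_interval_split:
  "\<exists>C. \<forall>a b c y. dist (\<mu> a y b) (\<mu> a (\<mu> a y b) c) \<le> C \<or> dist (\<mu> a y b) (\<mu> c (\<mu> a y b) b) \<le> C"
proof -
  define e where "e = H 4 + K * (H 4 + H 4 + H 4) + H0"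
  define e' where "e' = H 4 + K * (H 4 + H 4 + e) + H0"
  have "dist (\<mu> a y b) (\<mu> a (\<mu> a y b) c) \<le> e + e' \<or> dist (\<mu> a y b) (\<mu> c (\<mu> a y b) b) \<le> e + e'"
    for a b c y
  proof -
    obtain P :: "nat set" and m \<pi> lam where "median_algebra P m" and rank: "median_rank_le P m 1"
      and in_P: "\<And>z. z \<in> set [a, b, c, y] \<Longrightarrow> \<pi> z \<in> P"
      and hom: "\<And>x y z. x \<in> P \<Longrightarrow> y \<in> P \<Longrightarrow> z \<in> P \<Longrightarrow>
        dist (lam (m x y z)) (\<mu> (lam x) (lam y) (lam z)) \<le> H 4"
      and close: "\<And>z. z \<in> set [a, b, c, y] \<Longrightarrow> dist (lam (\<pi> z)) z \<le> H 4"
      by (rule finite_approximation[of "[a, b, c, y]" 4]) auto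
    interpret A: median_algebra P m by fact
    define x where "x = \<mu> a y b"
    define xo where "xo = m (\<pi> a) (\<pi> y) (\<pi> b)"
    have Po: "\<pi> a \<in> P" "\<pi> b \<in> P" "\<pi> c \<in> P" "\<pi> y \<in> P" using in_P by auto
    have xo_P: "xo \<in> P" using xo_def Po A.closed by simp
    have dx: "dist (lam xo) x \<le> e" unfolding xo_def x_def e_def
      by (rule dist_approx_median[OF hom Po(1,4,2)]) (use close in auto)
    have "m (\<pi> a) xo (\<pi> b) = xo" unfolding xo_def using A.median_in_interval Po by simp
    then have "m (\<pi> a) (\<pi> c) xo = xo \<or> m (\<pi> b) (\<pi> c) xo = xo"
      by (rule A.rank_one_interval_split[OF rank Po(1,2) xo_P Po(3)])
    then show ?thesis
    proof
      assume "m (\<pi> a) (\<pi> c) xo = xo"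
      moreover have "dist (lam (m (\<pi> a) (\<pi> c) xo)) (\<mu> a c x) \<le> e'"
        unfolding e'_def by (rule dist_approx_median[OF hom Po(1,3) xo_P]) (use close dx in auto)
      ultimately have "dist (lam xo) (\<mu> a x c) \<le> e'" using perm(1) by simp
      then show ?thesis
        using dist_triangle[of x "\<mu> a x c" "lam xo"] dx by (simp add: dist_commute x_def)
    next
      assume "m (\<pi> b) (\<pi> c) xo = xo"
      moreover have "dist (lam (m (\<pi> b) (\<pi> c) xo)) (\<mu> b c x) \<le> e'"
        unfolding e'_def by (rule dist_approx_median[OF hom Po(2,3) xo_P]) (use close dx in auto)
      ultimately have "dist (lam xo) (\<mu> c x b) \<le> e'" using perm(4)[where a=c and b=x and c=b] by simp
      then show ?thesis
        using dist_triangle[of x "\<mu> c x b" "lam xo"] dx by (simp add: dist_commute x_def)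
    qed
  qed
  then show ?thesis by blast
qed

lemma coarse_interval_convex:
  "\<exists>C. \<forall>a b y y'. dist (\<mu> a y' (\<mu> a y b)) (\<mu> a (\<mu> a y' (\<mu> a y b)) b) \<le> C"
proof -
  define e where "e = H 4 + K * (H 4 + H 4 + H 4) + H0"
  define e' where "e' = H 4 + K * (H 4 + H 4 + e) + H0"
  define e'' where "e'' = H 4 + K * (H 4 + e' + H 4) + H0"
  have "dist (\<mu> a y' (\<mu> a y b)) (\<mu> a (\<mu> a y' (\<mu> a y b)) b) \<le> e' + e''" for a b y y'
  proof -
    obtain P :: "nat set" and m \<pi> lam where "median_algebra P m"
      and in_P: "\<And>z. z \<in> set [a, b, y, y'] \<Longrightarrow> \<pi> z \<in> P"
      and hom: "\<And>x y z. x \<in> P \<Longrightarrow> y \<in> P \<Longrightarrow> z \<in> P \<Longrightarrow>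
        dist (lam (m x y z)) (\<mu> (lam x) (lam y) (lam z)) \<le> H 4"
      and close: "\<And>z. z \<in> set [a, b, y, y'] \<Longrightarrow> dist (lam (\<pi> z)) z \<le> H 4"
      by (rule finite_approximation[of "[a, b, y, y']" 4]) auto
    interpret A: median_algebra P m by fact
    define x where "x = \<mu> a y b"
    define w where "w = \<mu> a y' x"
    define xo where "xo = m (\<pi> a) (\<pi> y) (\<pi> b)"
    define wo where "wo = m (\<pi> a) (\<pi> y') xo"
    have Po: "\<pi> a \<in> P" "\<pi> b \<in> P" "\<pi> y \<in> P" "\<pi> y' \<in> P" using in_P by auto
    have xo_P: "xo \<in> P" and wo_P: "wo \<in> P" using xo_def wo_def Po A.closed by simp_all
    have dx: "dist (lam xo) x \<le> e" unfolding xo_def x_def e_def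
      by (rule dist_approx_median[OF hom Po(1,3,2)]) (use close in auto)
    have dw: "dist (lam wo) w \<le> e'" unfolding wo_def w_def e'_def
      by (rule dist_approx_median[OF hom Po(1,4) xo_P]) (use close dx in auto)
    have "m (\<pi> a) xo (\<pi> b) = xo" unfolding xo_def using A.median_in_interval Po by simp
    moreover have "m (\<pi> a) wo xo = wo" unfolding wo_def using A.median_in_interval Po xo_P by simp
    ultimately have "m (\<pi> a) wo (\<pi> b) = wo" using A.interval_convex Po xo_P wo_P by blast
    moreover have "dist (lam (m (\<pi> a) wo (\<pi> b))) (\<mu> a w b) \<le> e''" unfolding e''_def
      by (rule dist_approx_median[OF hom Po(1) wo_P Po(2)]) (use close dw in auto)
    ultimately have "dist (lam wo) (\<mu> a w b) \<le> e''" by simp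
    then show ?thesis
      using dist_triangle[of w "\<mu> a w b" "lam wo"] dw by (simp add: dist_commute w_def x_def)
  qed
  then show ?thesis by blast
qed

lemma coarse_median_of_interval_halves:
  "\<exists>C. \<forall>a b w w' w''. dist (\<mu> a w b) (\<mu> (\<mu> a w' (\<mu> a w b)) (\<mu> a w b) (\<mu> (\<mu> a w b) w'' b)) \<le> C"
proof -
  define e where "e = H 5 + K * (H 5 + H 5 + H 5) + H0"
  define e' where "e' = H 5 + K * (H 5 + H 5 + e) + H0"
  define e'' where "e'' = H 5 + K * (e' + e + e') + H0"
  have "dist (\<mu> a w b) (\<mu> (\<mu> a w' (\<mu> a w b)) (\<mu> a w b) (\<mu> (\<mu> a w b) w'' b)) \<le> e + e''"
    for a b w w' w''
  proof -
    obtain P :: "nat set" and m \<pi> lam where "median_algebra P m"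
      and in_P: "\<And>z. z \<in> set [a, b, w, w', w''] \<Longrightarrow> \<pi> z \<in> P"
      and hom: "\<And>x y z. x \<in> P \<Longrightarrow> y \<in> P \<Longrightarrow> z \<in> P \<Longrightarrow>
        dist (lam (m x y z)) (\<mu> (lam x) (lam y) (lam z)) \<le> H 5"
      and close: "\<And>z. z \<in> set [a, b, w, w', w''] \<Longrightarrow> dist (lam (\<pi> z)) z \<le> H 5"
      by (rule finite_approximation[of "[a, b, w, w', w'']" 5]) auto
    interpret A: median_algebra P m by fact
    define x where "x = \<mu> a w b"
    define y where "y = \<mu> a w' x"
    define y' where "y' = \<mu> x w'' b"
    define xo where "xo = m (\<pi> a) (\<pi> w) (\<pi> b)"
    define yo where "yo = m (\<pi> a) (\<pi> w') xo"
    define yo' where "yo' = m xo (\<pi> w'') (\<pi> b)"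
    have Po: "\<pi> a \<in> P" "\<pi> b \<in> P" "\<pi> w \<in> P" "\<pi> w' \<in> P" "\<pi> w'' \<in> P" using in_P by auto
    have xo_P: "xo \<in> P" and yo_P: "yo \<in> P" "yo' \<in> P"
      using xo_def yo_def yo'_def Po A.closed by simp_all
    have dx: "dist (lam xo) x \<le> e" unfolding xo_def x_def e_def
      by (rule dist_approx_median[OF hom Po(1,3,2)]) (use close in auto)
    have dy: "dist (lam yo) y \<le> e'" unfolding yo_def y_def e'_def
      by (rule dist_approx_median[OF hom Po(1,4) xo_P]) (use close dx in auto)
    have "dist (lam yo') y' \<le> H 5 + K * (e + H 5 + H 5) + H0" unfolding yo'_def y'_def
      by (rule dist_approx_median[OF hom xo_P Po(5,2)]) (use close dx in auto)
    then have dy': "dist (lam yo') y' \<le> e'" unfolding e'_def by (simp add: algebra_simps)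
    have "m (\<pi> a) xo (\<pi> b) = xo" unfolding xo_def using A.median_in_interval Po by simp
    moreover have "m (\<pi> a) yo xo = yo" unfolding yo_def using A.median_in_interval Po xo_P by simp
    moreover have "m xo yo' (\<pi> b) = yo'" unfolding yo'_def using A.median_in_interval Po xo_P by simp
    ultimately have "m yo xo yo' = xo"
      using A.median_of_interval_halves[OF Po(1,2) xo_P yo_P] by blast
    moreover have "dist (lam (m yo xo yo')) (\<mu> y x y') \<le> e''" unfolding e''_def
      by (rule dist_approx_median[OF hom yo_P(1) xo_P yo_P(2)]) (use dy dx dy' in auto)
    ultimately have "dist (lam xo) (\<mu> y x y') \<le> e''" by simp
    then show ?thesis
      using dist_triangle[of x "\<mu> y x y'" "lam xo"] dx by (simp add: dist_commute x_def y_def y'_def)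
  qed
  then show ?thesis by blast
qed

end

section \<open>Intervals near paths\<close>

lemma geodesic_spaceD:
  fixes x y :: "'a::metric_space"
  assumes "geodesic_space TYPE('a)"
  obtains g :: "real \<Rightarrow> 'a" where "g 0 = x" "g (dist x y) = y"
    "\<And>u v. u \<in> {0..dist x y} \<Longrightarrow> v \<in> {0..dist x y} \<Longrightarrow> dist (g u) (g v) = \<bar>u - v\<bar>"
proof -
  from assms obtain g :: "real \<Rightarrow> 'a" where "g 0 = x" "g (dist x y) = y"
    "\<forall>u\<in>{0..dist x y}. \<forall>v\<in>{0..dist x y}. dist (g u) (g v) = \<bar>u - v\<bar>"
    unfolding geodesic_space_def by blast
  then show ?thesis using that by blast
qed

lemma dist_isometric_path_lower:
  assumes iso: "\<And>u v. u \<in> {0..l} \<Longrightarrow> v \<in> {0..l} \<Longrightarrow> dist (h u) (h v) = \<bar>u - v\<bar>"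
    and "r \<in> {0..l}" "r' \<in> {0..l}"
  shows "dist x (h r) - l \<le> dist x (h r')"
proof -
  have "dist (h r') (h r) \<le> l" using iso[OF assms(3,2)] assms(2,3) by (simp add: abs_le_iff)
  then show ?thesis using dist_triangle[of x "h r" "h r'"] by linarith
qed

context rank_one_coarse_median
begin

definition interval_near :: "'a \<Rightarrow> 'a \<Rightarrow> 'a set \<Rightarrow> real \<Rightarrow> bool" where
  "interval_near a b G R \<longleftrightarrow> (\<forall>w. \<exists>p\<in>G. dist (\<mu> a w b) p \<le> R)"

lemma interval_near_mono:
  "interval_near a b G R \<Longrightarrow> G \<subseteq> G' \<Longrightarrow> R \<le> R' \<Longrightarrow> interval_near a b G' R'"
  unfolding interval_near_def by (meson order_trans subsetD)

lemma interval_near_commute: "interval_near a b G R \<Longrightarrow> interval_near b a G R"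
  unfolding interval_near_def by (metis perm(5))

lemma median_interval_chain:
  assumes "geodesic_space TYPE('a)"
  obtains q :: "nat \<Rightarrow> 'a" and N where "q 0 = a" "\<And>j. N \<le> j \<Longrightarrow> q j = b"
    "\<And>j. q j \<in> median_interval \<mu> a b" "\<And>j. dist (q j) (q (Suc j)) \<le> K + H0"
proof -
  define l where "l = dist a b"
  obtain g where g: "g 0 = a" "g l = b"
    and iso: "\<And>u v. u \<in> {0..l} \<Longrightarrow> v \<in> {0..l} \<Longrightarrow> dist (g u) (g v) = \<bar>u - v\<bar>"
    using geodesic_spaceD[OF assms, of a b] unfolding l_def by blast
  define q where "q j = \<mu> a (g (min (real j) l)) b" for j
  show ?thesis
  proof (rule that[of q "nat \<lceil>l\<rceil>"])
    show "q 0 = a" using g idem by (simp add: q_def l_def)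
    show "q j = b" if "nat \<lceil>l\<rceil> \<le> j" for j
    proof -
      have "min (real j) l = l" using that by linarith
      then show ?thesis using g idem_23 by (simp add: q_def)
    qed
    show "q j \<in> median_interval \<mu> a b" for j
      unfolding q_def by (rule median_in_median_interval)
    show "dist (q j) (q (Suc j)) \<le> K + H0" for j
    proof -
      have "0 \<le> l" using l_def by simp
      then have "min (real j) l \<in> {0..l}" "min (real (Suc j)) l \<in> {0..l}" by auto
      then have "dist (g (min (real j) l)) (g (min (real (Suc j)) l)) \<le> 1"
        by (simp add: iso abs_le_iff min_def)
      then have "K * dist (g (min (real j) l)) (g (min (real (Suc j)) l)) \<le> K"
        using K_nonneg mult_left_le by blast
      then show ?thesis
        using coarse_lipschitz[of a "g (min (real j) l)" b a "g (min (real (Suc j)) l)" b]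
        unfolding q_def by simp
    qed
  qed
qed

lemma interval_point_at_distance:
  assumes "geodesic_space TYPE('a)" "0 \<le> T"
  obtains w where "dist x (\<mu> e w x) \<le> T + K + H0" "\<mu> e w x = e \<or> T \<le> dist x (\<mu> e w x)"
proof (cases "dist x e \<le> T")
  case True
  show ?thesis
  proof (rule that[of e])
    show "dist x (\<mu> e e x) \<le> T + K + H0" using True K_nonneg H0_nonneg idem by simp
  qed (simp add: idem)
next
  case False
  obtain q N where q: "q 0 = x" "\<And>j. N \<le> j \<Longrightarrow> q j = e"
    "\<And>j. q j \<in> median_interval \<mu> x e" "\<And>j. dist (q j) (q (Suc j)) \<le> K + H0"
    by (rule median_interval_chain[OF assms(1), where a=x and b=e]) blast
  define j where "j = (LEAST j. T \<le> dist x (q j))"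
  have "T \<le> dist x (q N)" using False q(2)[of N] by simp
  then have far: "T \<le> dist x (q j)" unfolding j_def by (rule LeastI)
  have near: "dist x (q j) \<le> T + K + H0"
  proof (cases j)
    case 0
    then show ?thesis using q(1) assms(2) K_nonneg H0_nonneg by simp
  next
    case (Suc i)
    then have "dist x (q i) < T"
      using not_less_Least[of i "\<lambda>j. T \<le> dist x (q j)"] j_def by simp
    then show ?thesis using q(4)[of i] dist_triangle[of x "q j" "q i"] Suc by simp
  qed
  obtain y where "q j = \<mu> x y e" using q(3)[of j] unfolding median_interval_def by blast
  then have "q j = \<mu> e y x" using perm(5)[where a=x and b=y and c=e] by simp
  then show ?thesis using that[of y] far near by simp
qed

end

locale rank_one_coarse_median_bounds = rank_one_coarse_median +
  fixes C_split C_conv C_halves :: real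
  assumes interval_split:
      "dist (\<mu> a y b) (\<mu> a (\<mu> a y b) c) \<le> C_split \<or> dist (\<mu> a y b) (\<mu> c (\<mu> a y b) b) \<le> C_split"
    and interval_convex: "dist (\<mu> a y' (\<mu> a y b)) (\<mu> a (\<mu> a y' (\<mu> a y b)) b) \<le> C_conv"
    and interval_halves:
      "dist (\<mu> a w b) (\<mu> (\<mu> a w' (\<mu> a w b)) (\<mu> a w b) (\<mu> (\<mu> a w b) w'' b)) \<le> C_halves"

lemma (in rank_one_coarse_median) rank_one_coarse_median_boundsE:
  obtains C_split C_conv C_halves
  where "rank_one_coarse_median_bounds \<mu> K H0 H C_split C_conv C_halves"
proof -
  obtain C_split where
    "\<forall>a b c y. dist (\<mu> a y b) (\<mu> a (\<mu> a y b) c) \<le> C_split \<or> dist (\<mu> a y b) (\<mu> c (\<mu> a y b) b) \<le> C_split"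
    using coarse_interval_split by blast
  moreover obtain C_conv where
    "\<forall>a b y y'. dist (\<mu> a y' (\<mu> a y b)) (\<mu> a (\<mu> a y' (\<mu> a y b)) b) \<le> C_conv"
    using coarse_interval_convex by blast
  moreover obtain C_halves where
    "\<forall>a b w w' w''. dist (\<mu> a w b) (\<mu> (\<mu> a w' (\<mu> a w b)) (\<mu> a w b) (\<mu> (\<mu> a w b) w'' b)) \<le> C_halves"
    using coarse_median_of_interval_halves by blast
  ultimately show ?thesis by (intro that) (unfold_locales; blast)
qed

context rank_one_coarse_median_bounds
begin

lemma C_split_nonneg: "0 \<le> C_split"
  using interval_split[of x x x x] zero_le_dist order_trans by metis

lemma C_conv_nonneg: "0 \<le> C_conv"
  using interval_convex[of x x x x] zero_le_dist order_trans by metis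

lemma C_halves_nonneg: "0 \<le> C_halves"
  using interval_halves[of x x x x x] zero_le_dist order_trans by metis

lemma interval_near_split:
  assumes "interval_near a c G R" "interval_near c b G' R"
  shows "interval_near a b (G \<union> G') (C_split + R)"
  unfolding interval_near_def
proof
  fix w
  let ?x = "\<mu> a w b"
  from interval_split[of a w b c] show "\<exists>p\<in>G \<union> G'. dist ?x p \<le> C_split + R"
  proof
    assume "dist ?x (\<mu> a ?x c) \<le> C_split"
    moreover obtain p where "p \<in> G" "dist (\<mu> a ?x c) p \<le> R"
      using assms(1) unfolding interval_near_def by blast
    ultimately show ?thesis using dist_triangle[of ?x p "\<mu> a ?x c"] by force
  next
    assume "dist ?x (\<mu> c ?x b) \<le> C_split"
    moreover obtain p where "p \<in> G'" "dist (\<mu> c ?x b) p \<le> R"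
      using assms(2) unfolding interval_near_def by blast
    ultimately show ?thesis using dist_triangle[of ?x p "\<mu> c ?x b"] by force
  qed
qed

text \<open>Bisecting \<open>k\<close> times reduces a coarse path of parameter length \<open>2^k\<close> to pieces of
  length at most \<open>1\<close>, whose intervals are near their endpoints.\<close>

lemma interval_near_coarse_path:
  assumes "0 \<le> L" "\<alpha> \<le> \<beta>" "\<beta> - \<alpha> \<le> 2 ^ k"
    and "\<And>r r'. r \<in> {\<alpha>..\<beta>} \<Longrightarrow> r' \<in> {\<alpha>..\<beta>} \<Longrightarrow> dist (g r) (g r') \<le> L * \<bar>r - r'\<bar> + E"
  shows "interval_near (g \<alpha>) (g \<beta>) (g ` {\<alpha>..\<beta>}) (C_split * k + K * (L + E) + H0)"
  using assms(2-4)
proof (induction k arbitrary: \<alpha> \<beta>)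
  case 0
  have "dist (g \<alpha>) (g \<beta>) \<le> L * \<bar>\<alpha> - \<beta>\<bar> + E" using "0.prems"(3)[of \<alpha> \<beta>] "0.prems"(1) by simp
  also have "\<dots> \<le> L + E" using "0.prems" assms(1) by (simp add: mult_left_le)
  finally have "K * dist (g \<alpha>) (g \<beta>) + H0 \<le> K * (L + E) + H0" using K_nonneg by (simp add: mult_left_mono)
  then have "dist (\<mu> (g \<alpha>) w (g \<beta>)) (g \<alpha>) \<le> K * (L + E) + H0" for w
    using dist_median_left[of "g \<alpha>" "g \<beta>" w] perm(1) by (metis order_trans)
  then show ?case unfolding interval_near_def using "0.prems"(1) by force
next
  case (Suc k)
  define c where "c = (\<alpha> + \<beta>) / 2"
  have c: "\<alpha> \<le> c" "c \<le> \<beta>" "c - \<alpha> \<le> 2 ^ k" "\<beta> - c \<le> 2 ^ k"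
    using Suc.prems(1,2) by (simp_all add: c_def field_simps)
  have "interval_near (g \<alpha>) (g c) (g ` {\<alpha>..c}) (C_split * k + K * (L + E) + H0)"
    using c Suc.prems(3) by (intro Suc.IH) auto
  moreover have "interval_near (g c) (g \<beta>) (g ` {c..\<beta>}) (C_split * k + K * (L + E) + H0)"
    using c Suc.prems(3) by (intro Suc.IH) auto
  ultimately have "interval_near (g \<alpha>) (g \<beta>) (g ` {\<alpha>..c} \<union> g ` {c..\<beta>})
      (C_split + (C_split * k + K * (L + E) + H0))"
    by (rule interval_near_split)
  moreover have "g ` {\<alpha>..c} \<union> g ` {c..\<beta>} \<subseteq> g ` {\<alpha>..\<beta>}" using c by auto
  ultimately show ?case by (rule interval_near_mono) (simp add: algebra_simps)
qed

end

section \<open>Intervals and quasi-geodesics\<close>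

lemma quasi_geodesic_upper:
  "quasi_geodesic \<zeta> \<epsilon> s t \<gamma> \<Longrightarrow> u \<in> {s..t} \<Longrightarrow> v \<in> {s..t} \<Longrightarrow>
    dist (\<gamma> u) (\<gamma> v) \<le> \<zeta> * \<bar>u - v\<bar> + \<epsilon>"
  unfolding quasi_geodesic_def by blast

lemma quasi_geodesic_lower:
  assumes "quasi_geodesic \<zeta> \<epsilon> s t \<gamma>" "u \<in> {s..t}" "v \<in> {s..t}" "0 < \<zeta>"
  shows "\<bar>u - v\<bar> \<le> \<zeta> * (dist (\<gamma> u) (\<gamma> v) + \<epsilon>)"
proof -
  have "\<bar>u - v\<bar> / \<zeta> \<le> dist (\<gamma> u) (\<gamma> v) + \<epsilon>"
    using assms(1-3) unfolding quasi_geodesic_def by force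
  then show ?thesis using assms(4) by (simp add: divide_le_eq mult.commute)
qed

lemma infdist_lessE:
  assumes "A \<noteq> {}" "infdist x A < e"
  obtains a where "a \<in> A" "dist x a < e"
proof -
  have "(INF a\<in>A. dist x a) < e" using assms infdist_notempty by metis
  moreover have "bdd_below ((\<lambda>a. dist x a) ` A)" by (rule bdd_belowI[of _ 0]) auto
  ultimately show ?thesis using cINF_less_iff[OF assms(1)] that by blast
qed

lemma hausdorff_distance_le:
  assumes "\<And>a. a \<in> A \<Longrightarrow> infdist a B \<le> D" "\<And>b. b \<in> B \<Longrightarrow> infdist b A \<le> D"
  shows "hausdorff_distance A B \<le> ereal D"
  unfolding hausdorff_distance_def using assms by (auto intro!: SUP_least)

lemma nat_seq_crossing:
  fixes f :: "nat \<Rightarrow> real"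
  assumes "f 0 \<le> u" "u < f N"
  shows "\<exists>j. f j \<le> u \<and> u < f (Suc j)"
  using assms(2)
proof (induction N)
  case 0
  then show ?case using assms(1) by simp
next
  case (Suc N)
  then show ?case by (cases "u < f N") (auto simp: not_less)
qed

lemma square_le_exp: "4 \<le> k \<Longrightarrow> k * k \<le> (2::nat) ^ k"
proof (induction k rule: dec_induct)
  case base
  then show ?case by simp
next
  case (step n)
  have "4 * n \<le> n * n" using step(1) by (rule mult_le_mono1)
  have "Suc n * Suc n = n * n + 2 * n + 1" by simp
  also have "\<dots> \<le> n * n + n * n" using \<open>4 * n \<le> n * n\<close> step(1) by linarith
  also have "\<dots> \<le> 2 ^ Suc n" using step(3) by simp
  finally show ?case .
qed

lemma exp_le_linear_bounded:
  fixes c1 c2 :: real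
  assumes "0 \<le> c1" "0 \<le> c2"
  obtains N where "\<And>k::nat. 2 ^ k \<le> c1 * k + c2 \<Longrightarrow> k \<le> N"
proof
  fix k :: nat assume k: "2 ^ k \<le> c1 * k + c2"
  show "k \<le> max 4 (nat \<lceil>c1 + c2\<rceil>)"
  proof (rule ccontr)
    assume "\<not> ?thesis"
    then have k4: "4 \<le> k" and kc: "c1 + c2 < real k" by linarith+
    have "real (k * k) \<le> 2 ^ k" using square_le_exp[OF k4] by (metis of_nat_le_iff of_nat_numeral of_nat_power)
    also have "\<dots> \<le> c1 * k + c2 * k" using k k4 assms(2) mult_left_mono[of 1 "real k" c2] by simp
    also have "\<dots> < real k * k" using kc k4 by (simp add: distrib_right[symmetric])
    finally show False by simp
  qed
qed

lemma self_bound_logarithmic: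
  fixes \<alpha> \<beta> A C :: real
  assumes "0 \<le> \<alpha>" "0 \<le> \<beta>" "0 \<le> A" "0 \<le> C"
  obtains M where "\<And>S. (\<And>k::nat. \<alpha> * S + \<beta> \<le> 2 ^ k \<Longrightarrow> S \<le> A + C * k) \<Longrightarrow> S \<le> M"
proof -
  obtain N where N: "\<And>k::nat. 2 ^ k \<le> 2 * \<alpha> * C * k + (1 + 2 * (\<alpha> * A + \<beta>)) \<Longrightarrow> k \<le> N"
    using exp_le_linear_bounded[of "2 * \<alpha> * C" "1 + 2 * (\<alpha> * A + \<beta>)"] assms by auto
  show ?thesis
  proof (rule that[of "A + C * N"])
    fix S assume S: "\<And>k::nat. \<alpha> * S + \<beta> \<le> 2 ^ k \<Longrightarrow> S \<le> A + C * k"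
    define k where "k = (LEAST k::nat. \<alpha> * S + \<beta> \<le> 2 ^ k)"
    have "\<exists>k::nat. \<alpha> * S + \<beta> \<le> 2 ^ k" using real_arch_pow[of 2 "\<alpha> * S + \<beta>"] by (auto intro: less_imp_le)
    then have k: "\<alpha> * S + \<beta> \<le> 2 ^ k" unfolding k_def by (rule LeastI_ex)
    then have Sk: "S \<le> A + C * k" by (rule S)
    have "2 ^ k \<le> 2 * \<alpha> * C * k + (1 + 2 * (\<alpha> * A + \<beta>))"
    proof (cases k)
      case 0
      then show ?thesis using assms by simp
    next
      case (Suc i)
      then have "2 ^ i < \<alpha> * S + \<beta>"
        using not_less_Least[of i "\<lambda>k. \<alpha> * S + \<beta> \<le> 2 ^ k"] k_def by simp
      moreover have "\<alpha> * S \<le> \<alpha> * (A + C * k)" using Sk assms(1) by (rule mult_left_mono)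
      ultimately show ?thesis using Suc assms by (simp add: algebra_simps)
    qed
    then have "k \<le> N" by (rule N)
    then show "S \<le> A + C * N" using Sk assms(4) by (smt (verit) mult_left_mono of_nat_le_iff)
  qed
qed

context rank_one_coarse_median
begin

lemma quasi_geodesic_near_interval:
  assumes geo: "geodesic_space TYPE('a)" and "0 < \<zeta>"
    and qg: "quasi_geodesic \<zeta> \<epsilon> s t \<gamma>" and "s \<le> t" and "u \<in> {s..t}"
    and M: "\<And>x. x \<in> median_interval \<mu> (\<gamma> s) (\<gamma> t) \<Longrightarrow> infdist x (\<gamma> ` {s..t}) \<le> M"
  shows "infdist (\<gamma> u) (median_interval \<mu> (\<gamma> s) (\<gamma> t))
    \<le> \<zeta> * (\<zeta> * (2 * (M + 1) + K + H0 + \<epsilon>)) + \<epsilon> + M + 1"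
proof (cases "u = t")
  case True
  have b_in: "\<gamma> t \<in> median_interval \<mu> (\<gamma> s) (\<gamma> t)"
    using median_in_median_interval[of "\<gamma> s" "\<gamma> t" "\<gamma> t"] idem_23 by simp
  have "0 \<le> M" using M[OF b_in] infdist_nonneg order_trans by blast
  moreover have "0 \<le> \<epsilon>" using quasi_geodesic_upper[OF qg, of s s] \<open>s \<le> t\<close> by simp
  ultimately have "0 \<le> \<zeta> * (\<zeta> * (2 * (M + 1) + K + H0 + \<epsilon>)) + \<epsilon> + M + 1"
    using assms(2) K_nonneg H0_nonneg by simp
  then show ?thesis using True b_in by simp
next
  case False
  define I where "I = median_interval \<mu> (\<gamma> s) (\<gamma> t)"
  obtain q N where q: "q 0 = \<gamma> s" "\<And>j. N \<le> j \<Longrightarrow> q j = \<gamma> t" "\<And>j. q j \<in> I"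
    "\<And>j. dist (q j) (q (Suc j)) \<le> K + H0"
    unfolding I_def by (rule median_interval_chain[OF geo, where a="\<gamma> s" and b="\<gamma> t"]) blast
  have "\<exists>r. r \<in> {s..t} \<and> dist (q j) (\<gamma> r) \<le> M + 1 \<and> (j = 0 \<longrightarrow> r = s) \<and> (Suc N \<le> j \<longrightarrow> r = t)"
    for j
  proof -
    have "0 \<le> M" using M q(3)[of 0] infdist_nonneg order_trans unfolding I_def by blast
    consider "j = 0" | "Suc N \<le> j" | "j \<noteq> 0" "\<not> Suc N \<le> j" by blast
    then show ?thesis
    proof cases
      case 3
      have "infdist (q j) (\<gamma> ` {s..t}) < M + 1" using M[of "q j"] q(3)[of j] unfolding I_def by simp
      then obtain p where "p \<in> \<gamma> ` {s..t}" "dist (q j) p < M + 1"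
        using infdist_lessE \<open>s \<le> t\<close> by (metis atLeastAtMost_iff empty_iff image_is_empty order_refl)
      then show ?thesis using 3 by force
    qed (use q \<open>s \<le> t\<close> \<open>0 \<le> M\<close> in auto)
  qed
  then have "\<forall>j. \<exists>r. r \<in> {s..t} \<and> dist (q j) (\<gamma> r) \<le> M + 1 \<and> (j = 0 \<longrightarrow> r = s) \<and> (Suc N \<le> j \<longrightarrow> r = t)"
    by blast
  from choice[OF this] obtain v where v: "\<And>j. v j \<in> {s..t}" "\<And>j. dist (q j) (\<gamma> (v j)) \<le> M + 1"
    "v 0 = s" "v (Suc N) = t"
    by auto
  obtain j where j: "v j \<le> u" "u < v (Suc j)"
    using nat_seq_crossing[of v u "Suc N"] v(3,4) \<open>u \<in> {s..t}\<close> False by force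
  have "dist (\<gamma> (v j)) (\<gamma> (v (Suc j)))
      \<le> dist (\<gamma> (v j)) (q j) + dist (q j) (q (Suc j)) + dist (q (Suc j)) (\<gamma> (v (Suc j)))"
    using dist_triangle[of "\<gamma> (v j)" "\<gamma> (v (Suc j))" "q j"]
      dist_triangle[of "q j" "\<gamma> (v (Suc j))" "q (Suc j)"] by linarith
  also have "\<dots> \<le> (M + 1) + (K + H0) + (M + 1)"
    using v(2)[of j] v(2)[of "Suc j"] q(4)[of j] by (intro add_mono) (simp_all add: dist_commute)
  finally have "\<bar>v j - v (Suc j)\<bar> \<le> \<zeta> * (2 * (M + 1) + K + H0 + \<epsilon>)"
    using quasi_geodesic_lower[OF qg v(1,1) assms(2), of j "Suc j"] assms(2)
    by (smt (verit, ccfv_SIG) mult_left_mono)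
  then have "\<zeta> * \<bar>u - v j\<bar> \<le> \<zeta> * (\<zeta> * (2 * (M + 1) + K + H0 + \<epsilon>))"
    using j assms(2) by (intro mult_left_mono) auto
  then have "dist (\<gamma> u) (\<gamma> (v j)) \<le> \<zeta> * (\<zeta> * (2 * (M + 1) + K + H0 + \<epsilon>)) + \<epsilon>"
    using quasi_geodesic_upper[OF qg \<open>u \<in> {s..t}\<close> v(1)[of j]] by linarith
  then have "dist (\<gamma> u) (q j) \<le> \<zeta> * (\<zeta> * (2 * (M + 1) + K + H0 + \<epsilon>)) + \<epsilon> + M + 1"
    using dist_triangle[of "\<gamma> u" "q j" "\<gamma> (v j)"] v(2)[of j] by (simp add: dist_commute)
  then show ?thesis using infdist_le[OF q(3)] order_trans unfolding I_def by blast
qed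


lemma interval_point_near_set:
  assumes "geodesic_space TYPE('a)" "0 \<le> T"
    and near: "\<And>w. infdist (\<mu> e w x) G \<le> S" and "e \<in> G"
  obtains w z where "z \<in> G" "dist (\<mu> e w x) z \<le> S + 1" "dist x (\<mu> e w x) \<le> T + K + H0"
    "\<mu> e w x = z \<or> T \<le> dist x (\<mu> e w x)"
proof -
  obtain w where w: "dist x (\<mu> e w x) \<le> T + K + H0" "\<mu> e w x = e \<or> T \<le> dist x (\<mu> e w x)"
    by (rule interval_point_at_distance[OF assms(1,2)])
  have "0 \<le> S" using near[of w] infdist_nonneg order_trans by blast
  show thesis
  proof (cases "\<mu> e w x = e")
    case True
    then show thesis using that[of e w] w(1) \<open>e \<in> G\<close> \<open>0 \<le> S\<close> by simp
  next
    case False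
    obtain z where "z \<in> G" "dist (\<mu> e w x) z < S + 1"
      using infdist_lessE[of G "\<mu> e w x" "S + 1"] near[of w] \<open>e \<in> G\<close> by force
    then show thesis using that[of z w] w False by simp
  qed
qed

end

context rank_one_coarse_median_bounds
begin

lemma infdist_subinterval_le:
  assumes "\<And>v. v \<in> median_interval \<mu> a b \<Longrightarrow> infdist v G \<le> S"
    and "x \<in> median_interval \<mu> a b"
  shows "infdist (\<mu> a w x) G \<le> S + C_conv"
proof -
  obtain w0 where "x = \<mu> a w0 b" using assms(2) unfolding median_interval_def by blast
  then have "dist (\<mu> a w x) (\<mu> a (\<mu> a w x) b) \<le> C_conv" using interval_convex[of a w w0 b] by simp
  moreover have "infdist (\<mu> a (\<mu> a w x) b) G \<le> S" using assms(1) median_in_median_interval by blast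
  ultimately show ?thesis using infdist_triangle[of "\<mu> a w x" G "\<mu> a (\<mu> a w x) b"] by linarith
qed

lemma interval_near_geodesic:
  assumes "\<And>u v. u \<in> {0..l} \<Longrightarrow> v \<in> {0..l} \<Longrightarrow> dist (h u) (h v) = \<bar>u - v\<bar>"
    and "0 \<le> l" "l \<le> 2 ^ k"
  shows "interval_near (h 0) (h l) (h ` {0..l}) (C_split * k + K + H0)"
  using interval_near_coarse_path[of 1 0 l k h 0] assms by simp

lemma interval_near_quasi_geodesic:
  assumes qg: "quasi_geodesic \<zeta> \<epsilon> s t \<gamma>" and "0 \<le> \<zeta>"
    and "u \<in> {s..t}" "v \<in> {s..t}" "\<bar>u - v\<bar> \<le> 2 ^ k"
  shows "interval_near (\<gamma> u) (\<gamma> v) (\<gamma> ` {s..t}) (C_split * k + K * (\<zeta> + \<epsilon>) + H0)"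
proof -
  have ordered: "interval_near (\<gamma> u) (\<gamma> v) (\<gamma> ` {s..t}) (C_split * k + K * (\<zeta> + \<epsilon>) + H0)"
    if uv: "u \<le> v" "u \<in> {s..t}" "v \<in> {s..t}" "v - u \<le> 2 ^ k" for u v
  proof -
    have "interval_near (\<gamma> u) (\<gamma> v) (\<gamma> ` {u..v}) (C_split * k + K * (\<zeta> + \<epsilon>) + H0)"
    proof (rule interval_near_coarse_path)
      fix r r' assume "r \<in> {u..v}" "r' \<in> {u..v}"
      with uv show "dist (\<gamma> r) (\<gamma> r') \<le> \<zeta> * \<bar>r - r'\<bar> + \<epsilon>"
        by (intro quasi_geodesic_upper[OF qg]) auto
    qed (use uv \<open>0 \<le> \<zeta>\<close> in auto)
    moreover have "\<gamma> ` {u..v} \<subseteq> \<gamma> ` {s..t}" using uv by auto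
    ultimately show ?thesis by (rule interval_near_mono) simp
  qed
  show ?thesis
  proof (cases "u \<le> v")
    case True
    then show ?thesis using ordered assms(3-5) by simp
  next
    case False
    then have "interval_near (\<gamma> v) (\<gamma> u) (\<gamma> ` {s..t}) (C_split * k + K * (\<zeta> + \<epsilon>) + H0)"
      using ordered[of v u] assms(3-5) by simp
    then show ?thesis by (rule interval_near_commute)
  qed
qed

text \<open>The path running along a geodesic from \<open>y\<close> to \<open>z\<close>, near \<open>G\<close> from \<open>z\<close> to \<open>z'\<close> and along
  a geodesic from \<open>z'\<close> to \<open>y'\<close> comes close to every median of \<open>y\<close> and \<open>y'\<close>.\<close>

lemma far_from_path_bound:
  assumes geo: "geodesic_space TYPE('a)"
    and near_G: "interval_near z z' G R" and R: "C_split * k + K + H0 \<le> R"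
    and far_G: "\<And>p. p \<in> G \<Longrightarrow> D \<le> dist x p"
    and far_y: "D \<le> dist x y - dist y z" and far_y': "D \<le> dist x y' - dist z' y'"
    and short: "dist y z \<le> 2 ^ k" "dist z' y' \<le> 2 ^ k"
  shows "D \<le> dist x (\<mu> y w y') + 2 * C_split + R"
proof -
  obtain h where h: "h 0 = y" "h (dist y z) = z"
    and iso: "\<And>u v. u \<in> {0..dist y z} \<Longrightarrow> v \<in> {0..dist y z} \<Longrightarrow> dist (h u) (h v) = \<bar>u - v\<bar>"
    by (rule geodesic_spaceD[OF geo, of y z]) blast
  obtain h' where h': "h' 0 = z'" "h' (dist z' y') = y'"
    and iso': "\<And>u v. u \<in> {0..dist z' y'} \<Longrightarrow> v \<in> {0..dist z' y'} \<Longrightarrow> dist (h' u) (h' v) = \<bar>u - v\<bar>"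
    by (rule geodesic_spaceD[OF geo, of z' y']) blast
  have "interval_near y z (h ` {0..dist y z}) (C_split * k + K + H0)"
    using interval_near_geodesic[OF iso _ short(1)] h by simp
  then have near_h: "interval_near y z (h ` {0..dist y z}) (C_split + R)"
    by (rule interval_near_mono) (use R C_split_nonneg in auto)
  have "interval_near z' y' (h' ` {0..dist z' y'}) (C_split * k + K + H0)"
    using interval_near_geodesic[OF iso' _ short(2)] h' by simp
  then have "interval_near z' y' (h' ` {0..dist z' y'}) R"
    by (rule interval_near_mono) (use R in auto)
  with near_G have "interval_near z y' (G \<union> h' ` {0..dist z' y'}) (C_split + R)"
    by (rule interval_near_split)
  with near_h have "interval_near y y' (h ` {0..dist y z} \<union> (G \<union> h' ` {0..dist z' y'}))
      (C_split + (C_split + R))"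
    by (rule interval_near_split)
  then obtain p where p: "p \<in> h ` {0..dist y z} \<union> (G \<union> h' ` {0..dist z' y'})"
    and "dist (\<mu> y w y') p \<le> C_split + (C_split + R)"
    unfolding interval_near_def by blast
  moreover have "D \<le> dist x p"
    using p
  proof (elim UnE imageE)
    fix r assume "r \<in> {0..dist y z}" "p = h r"
    then show ?thesis using dist_isometric_path_lower[where l="dist y z" and h=h and r=0 and r'=r and x=x, OF iso] h(1) far_y by simp
  next
    fix r assume "r \<in> {0..dist z' y'}" "p = h' r"
    then show ?thesis
      using dist_isometric_path_lower[where l="dist z' y'" and h=h' and r="dist z' y'" and r'=r and x=x, OF iso'] h'(2) far_y' by simp
  qed (rule far_G)
  ultimately show ?thesis using dist_triangle[of x p "\<mu> y w y'"] by linarith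
qed


lemma interval_exit_point:
  assumes geo: "geodesic_space TYPE('a)"
    and S: "\<And>v. v \<in> median_interval \<mu> e b \<Longrightarrow> infdist v G \<le> S" and "0 \<le> S"
    and x: "x \<in> median_interval \<mu> e b" and far_G: "\<And>p. p \<in> G \<Longrightarrow> S - 1 < dist x p"
    and "e \<in> G"
  obtains w z where "z \<in> G" "dist (\<mu> e w x) z \<le> S + C_conv + 1"
    "dist x (\<mu> e w x) \<le> 2 * S + 2 + K + H0" "S - 1 - C_conv \<le> dist x (\<mu> e w x) - dist (\<mu> e w x) z"
proof -
  have "0 \<le> 2 * S + 2" using \<open>0 \<le> S\<close> by simp
  with geo obtain w z where z: "z \<in> G" "dist (\<mu> e w x) z \<le> S + C_conv + 1"
    "dist x (\<mu> e w x) \<le> 2 * S + 2 + K + H0" "\<mu> e w x = z \<or> 2 * S + 2 \<le> dist x (\<mu> e w x)"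
    using interval_point_near_set infdist_subinterval_le[OF S x] \<open>e \<in> G\<close> by metis
  have "S - 1 - C_conv \<le> dist x (\<mu> e w x) - dist (\<mu> e w x) z"
    using z(2,4) far_G[OF z(1)] C_conv_nonneg by auto
  with z show thesis using that by blast
qed

text \<open>The hypothesis on \<open>k\<close> makes \<open>2 ^ k\<close> exceed the parameter lengths of the three pieces of
  the path built from the exits of \<open>x\<close>.\<close>

lemma interval_distance_le_log:
  assumes geo: "geodesic_space TYPE('a)" and "0 < \<zeta>" "0 < \<epsilon>"
    and qg: "quasi_geodesic \<zeta> \<epsilon> s t \<gamma>" and "s \<le> t"
    and S: "\<And>v. v \<in> median_interval \<mu> (\<gamma> s) (\<gamma> t) \<Longrightarrow> infdist v (\<gamma> ` {s..t}) \<le> S"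
    and x: "x \<in> median_interval \<mu> (\<gamma> s) (\<gamma> t)" "S - 1 < infdist x (\<gamma> ` {s..t})"
    and k: "(1 + 6 * \<zeta>) * S + (C_conv + 1 + \<zeta> * (2 * C_conv + 6 + 2 * K + 2 * H0 + \<epsilon>)) \<le> 2 ^ k"
  shows "S \<le> 1 + C_conv + C_halves + 2 * C_split + K * (1 + \<zeta> + \<epsilon>) + H0 + C_split * k"
proof -
  define G where "G = \<gamma> ` {s..t}"
  have "0 \<le> S" using S x(1) infdist_nonneg order_trans by blast
  have ends: "\<gamma> s \<in> G" "\<gamma> t \<in> G" using \<open>s \<le> t\<close> by (auto simp: G_def)
  have far_G: "S - 1 < dist x p" if "p \<in> G" for p
    using x(2) infdist_le[OF that, of x] unfolding G_def by linarith
  obtain w z where z: "z \<in> G" "dist (\<mu> (\<gamma> s) w x) z \<le> S + C_conv + 1"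
    "dist x (\<mu> (\<gamma> s) w x) \<le> 2 * S + 2 + K + H0"
    "S - 1 - C_conv \<le> dist x (\<mu> (\<gamma> s) w x) - dist (\<mu> (\<gamma> s) w x) z"
    by (rule interval_exit_point[OF geo S[folded G_def] \<open>0 \<le> S\<close> x(1) far_G ends(1)])
  obtain w' z' where z': "z' \<in> G" "dist (\<mu> (\<gamma> t) w' x) z' \<le> S + C_conv + 1"
    "dist x (\<mu> (\<gamma> t) w' x) \<le> 2 * S + 2 + K + H0"
    "S - 1 - C_conv \<le> dist x (\<mu> (\<gamma> t) w' x) - dist (\<mu> (\<gamma> t) w' x) z'"
    using S x(1) median_interval_commute unfolding G_def
    by (metis interval_exit_point[OF geo _ \<open>0 \<le> S\<close> _ far_G ends(2), unfolded G_def])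
  define y y' where "y = \<mu> (\<gamma> s) w x" and "y' = \<mu> (\<gamma> t) w' x"
  obtain u u' where u: "u \<in> {s..t}" "z = \<gamma> u" "u' \<in> {s..t}" "z' = \<gamma> u'"
    using z(1) z'(1) unfolding G_def by blast
  obtain w0 where "x = \<mu> (\<gamma> s) w0 (\<gamma> t)" using x(1) unfolding median_interval_def by blast
  then have halves: "dist x (\<mu> y x y') \<le> C_halves"
    using interval_halves[of "\<gamma> s" w0 "\<gamma> t" w w'] perm(5)[where a=x and b=w' and c="\<gamma> t"]
    unfolding y_def y'_def by simp
  have pos: "0 \<le> \<zeta> * S" "0 \<le> \<zeta> * (2 * C_conv + 6 + 2 * K + 2 * H0 + \<epsilon>)"
    using \<open>0 < \<zeta>\<close> \<open>0 < \<epsilon>\<close> \<open>0 \<le> S\<close> C_conv_nonneg K_nonneg H0_nonneg by simp_all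
  have "dist z z' \<le> dist z y + dist y x + dist x y' + dist y' z'"
    using dist_triangle[of z z' y] dist_triangle[of y z' x] dist_triangle[of x z' y'] by linarith
  also have "\<dots> \<le> 6 * S + 2 * C_conv + 6 + 2 * K + 2 * H0"
    using z z' unfolding y_def y'_def by (simp add: dist_commute)
  finally have "\<bar>u - u'\<bar> \<le> \<zeta> * (6 * S + 2 * C_conv + 6 + 2 * K + 2 * H0 + \<epsilon>)"
    using quasi_geodesic_lower[OF qg u(1,3) \<open>0 < \<zeta>\<close>] u(2,4) \<open>0 < \<zeta>\<close>
    by (smt (verit) mult_left_mono)
  then have "\<bar>u - u'\<bar> \<le> 2 ^ k" using k pos C_conv_nonneg \<open>0 \<le> S\<close> by (simp add: algebra_simps)
  then have "interval_near z z' G (C_split * k + K * (\<zeta> + \<epsilon>) + H0)"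
    using interval_near_quasi_geodesic[OF qg _ u(1,3)] u(2,4) \<open>0 < \<zeta>\<close> unfolding G_def by simp
  then have "interval_near z z' G (C_split * k + K * (1 + \<zeta> + \<epsilon>) + H0)"
    by (rule interval_near_mono) (use K_nonneg in \<open>simp_all add: mult_left_mono\<close>)
  then have "S - 1 - C_conv \<le> dist x (\<mu> y x y') + 2 * C_split + (C_split * k + K * (1 + \<zeta> + \<epsilon>) + H0)"
  proof (rule far_from_path_bound[OF geo])
    show "C_split * k + K + H0 \<le> C_split * k + K * (1 + \<zeta> + \<epsilon>) + H0"
      using K_nonneg \<open>0 < \<zeta>\<close> \<open>0 < \<epsilon>\<close> by (simp add: algebra_simps)
    show "dist y z \<le> 2 ^ k" "dist z' y' \<le> 2 ^ k"
      using z(2) z'(2) k pos unfolding y_def y'_def by (simp_all add: dist_commute algebra_simps)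
    show "S - 1 - C_conv \<le> dist x p" if "p \<in> G" for p using far_G[OF that] C_conv_nonneg by simp
    show "S - 1 - C_conv \<le> dist x y - dist y z" using z(4) unfolding y_def .
    show "S - 1 - C_conv \<le> dist x y' - dist z' y'" using z'(4) unfolding y'_def by (simp add: dist_commute)
  qed
  then show ?thesis using halves by linarith
qed


lemma infdist_median_interval_bdd:
  assumes qg: "quasi_geodesic \<zeta> \<epsilon> s t \<gamma>" and "s \<le> t" "0 \<le> \<zeta>"
  shows "bdd_above ((\<lambda>v. infdist v (\<gamma> ` {s..t})) ` median_interval \<mu> (\<gamma> s) (\<gamma> t))"
proof -
  obtain k :: nat where "t - s \<le> 2 ^ k" using real_arch_pow[of 2 "t - s"] by (auto intro: less_imp_le)
  then have near: "interval_near (\<gamma> s) (\<gamma> t) (\<gamma> ` {s..t}) (C_split * k + K * (\<zeta> + \<epsilon>) + H0)"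
    using interval_near_quasi_geodesic[OF qg \<open>0 \<le> \<zeta>\<close>, of s t k] \<open>s \<le> t\<close> by simp
  have "infdist v (\<gamma> ` {s..t}) \<le> C_split * k + K * (\<zeta> + \<epsilon>) + H0"
    if v: "v \<in> median_interval \<mu> (\<gamma> s) (\<gamma> t)" for v
  proof -
    obtain w where "v = \<mu> (\<gamma> s) w (\<gamma> t)" using v unfolding median_interval_def by blast
    moreover obtain p where "p \<in> \<gamma> ` {s..t}" "dist (\<mu> (\<gamma> s) w (\<gamma> t)) p \<le> C_split * k + K * (\<zeta> + \<epsilon>) + H0"
      using near unfolding interval_near_def by blast
    ultimately show ?thesis using infdist_le[of p "\<gamma> ` {s..t}" v] by simp
  qed
  then show ?thesis by (rule bdd_aboveI2)
qed

lemma median_interval_near_quasi_geodesic: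
  assumes geo: "geodesic_space TYPE('a)" and "0 < \<zeta>" "0 < \<epsilon>"
  obtains M where "\<And>s t \<gamma> x. s \<le> t \<Longrightarrow> quasi_geodesic \<zeta> \<epsilon> s t \<gamma> \<Longrightarrow>
    x \<in> median_interval \<mu> (\<gamma> s) (\<gamma> t) \<Longrightarrow> infdist x (\<gamma> ` {s..t}) \<le> M"
proof -
  define \<beta> where "\<beta> = C_conv + 1 + \<zeta> * (2 * C_conv + 6 + 2 * K + 2 * H0 + \<epsilon>)"
  define A where "A = 1 + C_conv + C_halves + 2 * C_split + K * (1 + \<zeta> + \<epsilon>) + H0"
  have "0 \<le> 1 + 6 * \<zeta>" "0 \<le> \<beta>" "0 \<le> A"
    using \<open>0 < \<zeta>\<close> \<open>0 < \<epsilon>\<close> C_conv_nonneg C_halves_nonneg C_split_nonneg K_nonneg H0_nonneg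
    by (simp_all add: \<beta>_def A_def)
  then obtain M where M: "\<And>S. (\<And>k::nat. (1 + 6 * \<zeta>) * S + \<beta> \<le> 2 ^ k \<Longrightarrow> S \<le> A + C_split * k) \<Longrightarrow> S \<le> M"
    using self_bound_logarithmic C_split_nonneg by blast
  show thesis
  proof (rule that)
    fix s t \<gamma> x
    assume "s \<le> t" and qg: "quasi_geodesic \<zeta> \<epsilon> s t \<gamma>" and x: "x \<in> median_interval \<mu> (\<gamma> s) (\<gamma> t)"
    define I where "I = median_interval \<mu> (\<gamma> s) (\<gamma> t)"
    define f where "f v = infdist v (\<gamma> ` {s..t})" for v
    have "I \<noteq> {}" using x unfolding I_def by blast
    have bdd: "bdd_above (f ` I)"
      using infdist_median_interval_bdd[OF qg \<open>s \<le> t\<close>] \<open>0 < \<zeta>\<close> unfolding I_def f_def by simp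
    define S where "S = (SUP v\<in>I. f v)"
    have S_ub: "f v \<le> S" if "v \<in> I" for v unfolding S_def using bdd that by (rule cSUP_upper2) simp
    have "S \<le> M"
    proof (rule M)
      fix k :: nat assume k: "(1 + 6 * \<zeta>) * S + \<beta> \<le> 2 ^ k"
      obtain v where "v \<in> I" "S - 1 < f v"
        using less_cSUP_iff[OF \<open>I \<noteq> {}\<close> bdd, of "S - 1"] unfolding S_def by auto
      then show "S \<le> A + C_split * k" unfolding A_def
        using interval_distance_le_log[OF geo \<open>0 < \<zeta>\<close> \<open>0 < \<epsilon>\<close> qg \<open>s \<le> t\<close> _ _ _ k[unfolded \<beta>_def]]
          S_ub unfolding I_def f_def by blast
    qed
    then show "infdist x (\<gamma> ` {s..t}) \<le> M" using S_ub[of x] x unfolding I_def f_def by simp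
  qed
qed


lemma interval_quasi_geodesic_hausdorff_bound:
  assumes geo: "geodesic_space TYPE('a)" and "0 < \<zeta>" "0 < \<epsilon>"
  obtains D where "\<And>s t \<gamma>. s \<le> t \<Longrightarrow> quasi_geodesic \<zeta> \<epsilon> s t \<gamma> \<Longrightarrow>
    hausdorff_distance (median_interval \<mu> (\<gamma> s) (\<gamma> t)) (\<gamma> ` {s..t}) \<le> ereal D"
proof -
  obtain M where M: "\<And>s t \<gamma> x. s \<le> t \<Longrightarrow> quasi_geodesic \<zeta> \<epsilon> s t \<gamma> \<Longrightarrow>
      x \<in> median_interval \<mu> (\<gamma> s) (\<gamma> t) \<Longrightarrow> infdist x (\<gamma> ` {s..t}) \<le> M"
    using median_interval_near_quasi_geodesic[OF assms] by blast
  define D where "D = max M (\<zeta> * (\<zeta> * (2 * (M + 1) + K + H0 + \<epsilon>)) + \<epsilon> + M + 1)"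
  have "hausdorff_distance (median_interval \<mu> (\<gamma> s) (\<gamma> t)) (\<gamma> ` {s..t}) \<le> ereal D"
    if st: "s \<le> t" and qg: "quasi_geodesic \<zeta> \<epsilon> s t \<gamma>" for s t \<gamma>
  proof (rule hausdorff_distance_le)
    fix x assume "x \<in> median_interval \<mu> (\<gamma> s) (\<gamma> t)"
    then show "infdist x (\<gamma> ` {s..t}) \<le> D" using M[OF st qg] unfolding D_def by (simp add: le_max_iff_disj)
  next
    fix y assume "y \<in> \<gamma> ` {s..t}"
    then show "infdist y (median_interval \<mu> (\<gamma> s) (\<gamma> t)) \<le> D" unfolding D_def
      using quasi_geodesic_near_interval[OF geo \<open>0 < \<zeta>\<close> qg st _ M[OF st qg]] by (auto intro: max.coboundedI2)
  qed
  then show thesis by (rule that)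
qed

end

lemma coarse_median_rank_oneE:
  fixes \<mu> :: "'a::metric_space \<Rightarrow> 'a \<Rightarrow> 'a \<Rightarrow> 'a"
  assumes "coarse_median_rank \<mu> 1"
  obtains K H0 H where "rank_one_coarse_median \<mu> K H0 H"
proof -
  have "coarse_median_rank_le \<mu> 1" using assms unfolding coarse_median_rank_def by (rule conjunct1)
  note rank = this[unfolded coarse_median_rank_le_def]
  from rank have idem: "\<forall>a b. \<mu> a a b = a" by (rule conjunct1)
  from rank have comm: "\<forall>a b c. \<mu> a b c = \<mu> b a c \<and> \<mu> a b c = \<mu> a c b \<and> \<mu> a b c = \<mu> b c a"
    by (rule conjunct2[THEN conjunct1])
  from rank obtain K H0 and H :: "nat \<Rightarrow> real" where
    lip: "\<forall>a b c a' b' c'. dist (\<mu> a b c) (\<mu> a' b' c') \<le> K * (dist a a' + dist b b' + dist c c') + H0"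
    and approx: "\<forall>p A. finite A \<and> 1 \<le> card A \<and> card A \<le> p \<longrightarrow>
      (\<exists>(P :: nat set) m \<pi> lam. finite P \<and> median_algebra_on P m \<and> median_rank_le P m 1 \<and> \<pi> ` A \<subseteq> P \<and>
        (\<forall>x\<in>P. \<forall>y\<in>P. \<forall>z\<in>P. dist (lam (m x y z)) (\<mu> (lam x) (lam y) (lam z)) \<le> H p) \<and>
        (\<forall>a\<in>A. dist (lam (\<pi> a)) a \<le> H p))"
    by (elim conjE exE) (rule that; assumption)
  show thesis
  proof (rule that[of "\<bar>K\<bar>" H0 H], unfold_locales)
    fix a b c a' b' c' :: 'a
    have "K * (dist a a' + dist b b' + dist c c') \<le> \<bar>K\<bar> * (dist a a' + dist b b' + dist c c')"
      by (intro mult_right_mono) auto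
    then show "dist (\<mu> a b c) (\<mu> a' b' c') \<le> \<bar>K\<bar> * (dist a a' + dist b b' + dist c c') + H0"
      using lip[rule_format, of a b c a' b' c'] by linarith
  next
    fix p and A :: "'a set"
    assume "finite A" "1 \<le> card A" "card A \<le> p"
    then have "finite A \<and> 1 \<le> card A \<and> card A \<le> p" by simp
    from approx[rule_format, OF this]
    show "\<exists>(P :: nat set) m \<pi> lam. median_algebra_on P m \<and> median_rank_le P m 1 \<and> \<pi> ` A \<subseteq> P \<and>
        (\<forall>x\<in>P. \<forall>y\<in>P. \<forall>z\<in>P. dist (lam (m x y z)) (\<mu> (lam x) (lam y) (lam z)) \<le> H p) \<and>
        (\<forall>a\<in>A. dist (lam (\<pi> a)) a \<le> H p)"
      by (elim exE conjE) (intro exI conjI; assumption)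
  qed (use idem comm in auto)
qed

theorem theorem4p2:
  fixes \<mu> :: "'a::metric_space \<Rightarrow> 'a \<Rightarrow> 'a \<Rightarrow> 'a"
  assumes "coarse_median_rank \<mu> 1"
    and "geodesic_space TYPE('a)"
  shows "\<forall>\<zeta> \<epsilon>. \<zeta> > 0 \<and> \<epsilon> > 0 \<longrightarrow>
           (\<exists>D::real. \<forall>a b s t (\<gamma>::real \<Rightarrow> 'a).
              s \<le> t \<and> quasi_geodesic \<zeta> \<epsilon> s t \<gamma> \<and> \<gamma> s = a \<and> \<gamma> t = b \<longrightarrow>
              hausdorff_distance (median_interval \<mu> a b) (\<gamma> ` {s..t}) < ereal D)"
proof (intro allI impI)
  fix \<zeta> \<epsilon> :: real
  assume "\<zeta> > 0 \<and> \<epsilon> > 0"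
  obtain K H0 H where "rank_one_coarse_median \<mu> K H0 H" using coarse_median_rank_oneE[OF assms(1)] .
  then interpret rank_one_coarse_median \<mu> K H0 H .
  obtain C_split C_conv C_halves where "rank_one_coarse_median_bounds \<mu> K H0 H C_split C_conv C_halves"
    by (rule rank_one_coarse_median_boundsE)
  then interpret rank_one_coarse_median_bounds \<mu> K H0 H C_split C_conv C_halves .
  obtain D where D: "\<And>s t \<gamma>. s \<le> t \<Longrightarrow> quasi_geodesic \<zeta> \<epsilon> s t \<gamma> \<Longrightarrow>
      hausdorff_distance (median_interval \<mu> (\<gamma> s) (\<gamma> t)) (\<gamma> ` {s..t}) \<le> ereal D"
    using interval_quasi_geodesic_hausdorff_bound[OF assms(2)] \<open>\<zeta> > 0 \<and> \<epsilon> > 0\<close> by blast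
  have "hausdorff_distance (median_interval \<mu> (\<gamma> s) (\<gamma> t)) (\<gamma> ` {s..t}) < ereal (D + 1)"
    if "s \<le> t" "quasi_geodesic \<zeta> \<epsilon> s t \<gamma>" for s t \<gamma>
    using D[OF that] by (rule le_less_trans) simp
  then show "\<exists>D. \<forall>a b s t \<gamma>. s \<le> t \<and> quasi_geodesic \<zeta> \<epsilon> s t \<gamma> \<and> \<gamma> s = a \<and> \<gamma> t = b \<longrightarrow>
      hausdorff_distance (median_interval \<mu> a b) (\<gamma> ` {s..t}) < ereal D"
    by blast
qed

end
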